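(* (a) Soundness $\Delta^{\mathcal T}_{\mathcal R}\triangleleft\lambda^{\mathcal T}_\cap$ holds for $\Delta^{CD}_{\equiv}$, $\Delta^{CDV}_{\equiv}$, $\Delta^{CDS}_{\equiv}$, $\Delta^{BCD}_{\equiv}$, $\Delta^{CDS}_{=_\beta}$ and $\Delta^{BCD}_{=_\beta}$, and fails for $\Delta^{CD}_{=_\beta}$, $\Delta^{CDV}_{=_\beta}$, $\Delta^{CDV}_{=_{\beta\eta}}$ and $\Delta^{BCD}_{=_{\beta\eta}}$. (b) Completeness $\Delta^{\mathcal T}_{\mathcal R}\triangleright\lambda^{\mathcal T}_\cap$ holds for all ten systems $\Delta^{\mathcal T}_{\equiv}$, $\Delta^{\mathcal T}_{=_\beta}$ ($\mathcal T\in\{CD,CDS,CDV,BCD\}$), $\Delta^{CDV}_{=_{\beta\eta}}$, $\Delta^{BCD}_{=_{\beta\eta}}$. Consequently $\Delta^{\mathcal T}_{\mathcal R}\sim\lambda^{\mathcal T}_\cap$ exactly for the six systems listed as sound in (a).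
   Context: Type atoms: a set $\mathbb{A}$ of symbols; $\omega$ denotes a distinguished atom (the universal type). $\mathbb{A}_\infty=\{\mathtt a_i\mid i\in\mathbb N\}$ with each $\mathtt a_i\neq\omega$, and $\mathbb{A}^\omega_\infty=\mathbb{A}_\infty\cup\{\omega\}$. Intersection types over $\mathbb A$: $\sigma::= a\mid\sigma\to\sigma\mid\sigma\cap\sigma$ ($a\in\mathbb A$). An intersection type theory $\mathcal T$ over $\mathbb A$ is a set of inequalities $\sigma\le\tau$ (written $\sigma\le_{\mathcal T}\tau$) closed under (refl) $\sigma\le\sigma$; (incl) $\sigma\cap\tau\le\sigma$ and $\sigma\cap\tau\le\tau$; (glb) $\rho\le\sigma$ and $\rho\le\tau$ imply $\rho\le\sigma\cap\tau$; (trans) $\sigma\le\tau$ and $\tau\le\rho$ imply $\sigma\le\rho$. Additional axioms/rules: $(\omega_{top})$ $\sigma\le\omega$; $(\omega_{\to})$ $\omega\le\sigma\to\omega$; $(\to\cap)$ $(\sigma\to\tau)\cap(\sigma\to\rho)\le\sigma\to(\tau\cap\rho)$; $(\to)$ $\sigma_2\le\sigma_1$ and $\tau_1\le\tau_2$ imply $\sigma_1\to\tau_1\le\sigma_2\to\tau_2$. $\mathcal T_{CD}$ = smallest type theory over $\mathbb A_\infty$; $\mathcal T_{CDS}$ = smallest over $\mathbb A^\omega_\infty$ containing $(\omega_{top})$; $\mathcal T_{CDV}$ = smallest over $\mathbb A_\infty$ closed under $(\to)$ and $(\to\cap)$; $\mathcal T_{BCD}$ = smallest over $\mathbb A^\omega_\infty$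 closed under $(\to),(\to\cap),(\omega_{top}),(\omega_\to)$. We abbreviate these as CD, CDS, CDV, BCD. Type assignment: for a type theory $\mathcal T$ over atoms $\mathbb A$, $\lambda^{\mathcal T}_\cap$ derives judgments $B\vdash^{\mathcal T}_\cap M:\sigma$ for pure $\lambda$-terms $M$ and bases $B$ (finite sets of declarations $x{:}\sigma$ with distinct variables) by: (ax) $B\vdash x:\sigma$ if $x{:}\sigma\in B$; ($\to$I) from $B,x{:}\sigma\vdash M:\tau$ infer $B\vdash\lambda x.M:\sigma\to\tau$; ($\to$E) from $B\vdash M:\sigma\to\tau$ and $B\vdash N:\sigma$ infer $B\vdash MN:\tau$; ($\cap$I) from $B\vdash M:\sigma$ and $B\vdash M:\tau$ infer $B\vdash M:\sigma\cap\tau$; ($\cap$E) from $B\vdash M:\sigma\cap\tau$ infer $B\vdash M:\sigma$ and $B\vdash M:\tau$; (top) $B\vdash M:\omega$ if $\omega\in\mathbb A$; ($\le_{\mathcal T}$) from $B\vdash M:\sigma$ and $\sigma\le_{\mathcal T}\tau$ infer $B\vdash M:\tau$. $\Delta$-terms: $\Delta::=u_\Delta\mid x\mid\lambda x{:}\sigma.\Delta\mid\Delta\,\Delta\mid\langle\Delta,\Delta\rangle\mid pr_1\Delta\mid pr_2\Delta\mid\Delta^\sigma$, where for every (not necessarily typable) $\Delta$-term $\Delta$ there is a constant $u_\Delta$. The essence $\|\Delta\|$ is the pure $\lambda$-term defined by $\|x\|=x$, $\|u_\Delta\|=\|\Delta\|$, $\|\Delta^\sigma\|=\|\Delta\|$,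 $\|\lambda x{:}\sigma.\Delta\|=\lambda x.\|\Delta\|$, $\|\Delta_1\Delta_2\|=\|\Delta_1\|\,\|\Delta_2\|$, $\|\langle\Delta_1,\Delta_2\rangle\|=\|\Delta_1\|$, $\|pr_i\Delta\|=\|\Delta\|$. Let $\mathcal R$ be one of $\equiv$ (syntactic identity up to $\alpha$), $=_\beta$, $=_{\beta\eta}$ on pure $\lambda$-terms. The typed system $\Delta^{\mathcal T}_{\mathcal R}$ derives $B\vdash^{\mathcal T}_{\mathcal R}\Delta:\sigma$ by: (top) $B\vdash u_\Delta:\omega$ if $\omega\in\mathbb A$; (ax) $B\vdash x:\sigma$ if $x{:}\sigma\in B$; ($\to$I) from $B,x{:}\sigma\vdash\Delta:\tau$ infer $B\vdash\lambda x{:}\sigma.\Delta:\sigma\to\tau$; ($\to$E) from $B\vdash\Delta_1:\sigma\to\tau$ and $B\vdash\Delta_2:\sigma$ infer $B\vdash\Delta_1\Delta_2:\tau$; ($\cap$I) from $B\vdash\Delta_1:\sigma$, $B\vdash\Delta_2:\tau$ and $\|\Delta_1\|\mathrel{\mathcal R}\|\Delta_2\|$ infer $B\vdash\langle\Delta_1,\Delta_2\rangle:\sigma\cap\tau$; ($\cap$E$_1$) from $B\vdash\Delta:\sigma\cap\tau$ infer $B\vdash pr_1\Delta:\sigma$; ($\cap$E$_2$) from $B\vdash\Delta:\sigma\cap\tau$ infer $B\vdash pr_2\Delta:\tau$; ($\le_{\mathcal T}$) from $B\vdash\Delta:\sigma$ and $\sigma\le_{\mathcal T}\tau$ infer $B\vdash\Delta^\tau:\tau$.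 We write $\Delta^{CD}_{\mathcal R}$ for $\Delta^{\mathcal T_{CD}}_{\mathcal R}$, etc. Soundness $\Delta^{\mathcal T}_{\mathcal R}\triangleleft\lambda^{\mathcal T}_\cap$: for all $B,\Delta,\sigma$, $B\vdash^{\mathcal T}_{\mathcal R}\Delta:\sigma$ implies $B\vdash^{\mathcal T}_\cap\|\Delta\|:\sigma$. Completeness $\Delta^{\mathcal T}_{\mathcal R}\triangleright\lambda^{\mathcal T}_\cap$: for all $B,M,\sigma$, $B\vdash^{\mathcal T}_\cap M:\sigma$ implies there is $\Delta$ with $M\equiv\|\Delta\|$ and $B\vdash^{\mathcal T}_{\mathcal R}\Delta:\sigma$. Isomorphism $\Delta^{\mathcal T}_{\mathcal R}\sim\lambda^{\mathcal T}_\cap$: both soundness and completeness. *)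

theory Defs
  imports Main
begin

text \<open>Atoms: Atom i is a_i (i in nat), Om is the universal atom omega.\<close>
datatype ity = Atom nat | Om | Arr ity ity | Inter ity ity

datatype theory_name = CD | CDS | CDV | BCD

text \<open>omega is an atom of the theory (atom set A^omega_infinity) iff CDS or BCD.\<close>
definition has_omega :: "theory_name \<Rightarrow> bool" where
  "has_omega T \<longleftrightarrow> T = CDS \<or> T = BCD"

definition has_arrow_rules :: "theory_name \<Rightarrow> bool" where
  "has_arrow_rules T \<longleftrightarrow> T = CDV \<or> T = BCD"

fun ty_ok :: "theory_name \<Rightarrow> ity \<Rightarrow> bool" where
  "ty_ok T (Atom i) = True"
| "ty_ok T Om = has_omega T"
| "ty_ok T (Arr s t) = (ty_ok T s \<and> ty_ok T t)"
| "ty_ok T (Inter s t) = (ty_ok T s \<and> ty_ok T t)"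

inductive leq :: "theory_name \<Rightarrow> ity \<Rightarrow> ity \<Rightarrow> bool" for T where
  refl: "ty_ok T s \<Longrightarrow> leq T s s"
| incl1: "ty_ok T s \<Longrightarrow> ty_ok T t \<Longrightarrow> leq T (Inter s t) s"
| incl2: "ty_ok T s \<Longrightarrow> ty_ok T t \<Longrightarrow> leq T (Inter s t) t"
| glb: "leq T r s \<Longrightarrow> leq T r t \<Longrightarrow> leq T r (Inter s t)"
| trans: "leq T s t \<Longrightarrow> leq T t r \<Longrightarrow> leq T s r"
| omega_top: "T = CDS \<or> T = BCD \<Longrightarrow> ty_ok T s \<Longrightarrow> leq T s Om"
| omega_arr: "T = BCD \<Longrightarrow> ty_ok T s \<Longrightarrow> leq T Om (Arr s Om)"
| arr_inter: "has_arrow_rules T \<Longrightarrow> ty_ok T s \<Longrightarrow> ty_ok T t \<Longrightarrow> ty_ok T r \<Longrightarrow>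
      leq T (Inter (Arr s t) (Arr s r)) (Arr s (Inter t r))"
| arr: "has_arrow_rules T \<Longrightarrow> leq T s2 s1 \<Longrightarrow> leq T t1 t2 \<Longrightarrow>
      leq T (Arr s1 t1) (Arr s2 t2)"

section \<open>Pure lambda terms (de Bruijn indices, so alpha-equivalence is equality)\<close>

datatype lterm = LVar nat | LApp lterm lterm | LAbs lterm

primrec llift :: "lterm \<Rightarrow> nat \<Rightarrow> lterm" where
  "llift (LVar i) k = (if i < k then LVar i else LVar (Suc i))"
| "llift (LApp s t) k = LApp (llift s k) (llift t k)"
| "llift (LAbs s) k = LAbs (llift s (Suc k))"

primrec lsubst :: "lterm \<Rightarrow> lterm \<Rightarrow> nat \<Rightarrow> lterm" where
  "lsubst (LVar i) s k = (if k < i then LVar (i - 1) else if i = k then s else LVar i)"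
| "lsubst (LApp t u) s k = LApp (lsubst t s k) (lsubst u s k)"
| "lsubst (LAbs t) s k = LAbs (lsubst t (llift s 0) (Suc k))"

inductive beta :: "lterm \<Rightarrow> lterm \<Rightarrow> bool" where
  b: "beta (LApp (LAbs s) t) (lsubst s t 0)"
| appL: "beta s t \<Longrightarrow> beta (LApp s u) (LApp t u)"
| appR: "beta s t \<Longrightarrow> beta (LApp u s) (LApp u t)"
| abs: "beta s t \<Longrightarrow> beta (LAbs s) (LAbs t)"

inductive beta_eta :: "lterm \<Rightarrow> lterm \<Rightarrow> bool" where
  b: "beta_eta (LApp (LAbs s) t) (lsubst s t 0)"
| e: "beta_eta (LAbs (LApp (llift s 0) (LVar 0))) s"
| appL: "beta_eta s t \<Longrightarrow> beta_eta (LApp s u) (LApp t u)"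
| appR: "beta_eta s t \<Longrightarrow> beta_eta (LApp u s) (LApp u t)"
| abs: "beta_eta s t \<Longrightarrow> beta_eta (LAbs s) (LAbs t)"

datatype rel_name = Syn | Beta | BetaEta

fun releq :: "rel_name \<Rightarrow> lterm \<Rightarrow> lterm \<Rightarrow> bool" where
  "releq Syn M N = (M = N)"
| "releq Beta M N = (sup beta beta\<inverse>\<inverse>)\<^sup>*\<^sup>* M N"
| "releq BetaEta M N = (sup beta_eta beta_eta\<inverse>\<inverse>)\<^sup>*\<^sup>* M N"

type_synonym basis = "nat \<Rightarrow> ity option"

definition ext_basis :: "ity \<Rightarrow> basis \<Rightarrow> basis" where
  "ext_basis s B = (\<lambda>n. case n of 0 \<Rightarrow> Some s | Suc m \<Rightarrow> B m)"

definition basis_ok :: "theory_name \<Rightarrow> basis \<Rightarrow> bool" where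
  "basis_ok T B \<longleftrightarrow> finite (dom B) \<and> (\<forall>x s. B x = Some s \<longrightarrow> ty_ok T s)"

inductive ltyp :: "theory_name \<Rightarrow> basis \<Rightarrow> lterm \<Rightarrow> ity \<Rightarrow> bool" for T where
  ax: "B x = Some s \<Longrightarrow> ltyp T B (LVar x) s"
| arrI: "ty_ok T s \<Longrightarrow> ltyp T (ext_basis s B) M t \<Longrightarrow> ltyp T B (LAbs M) (Arr s t)"
| arrE: "ltyp T B M (Arr s t) \<Longrightarrow> ltyp T B N s \<Longrightarrow> ltyp T B (LApp M N) t"
| interI: "ltyp T B M s \<Longrightarrow> ltyp T B M t \<Longrightarrow> ltyp T B M (Inter s t)"
| interE1: "ltyp T B M (Inter s t) \<Longrightarrow> ltyp T B M s"
| interE2: "ltyp T B M (Inter s t) \<Longrightarrow> ltyp T B M t"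
| top: "has_omega T \<Longrightarrow> ltyp T B M Om"
| sub: "ltyp T B M s \<Longrightarrow> leq T s t \<Longrightarrow> ltyp T B M t"

datatype dterm =
    DU dterm
  | DVar nat
  | DLam ity dterm
  | DApp dterm dterm
  | DPair dterm dterm
  | DPr1 dterm
  | DPr2 dterm
  | DCoe dterm ity

primrec ess :: "dterm \<Rightarrow> lterm" where
  "ess (DU d) = ess d"
| "ess (DVar x) = LVar x"
| "ess (DLam s d) = LAbs (ess d)"
| "ess (DApp d1 d2) = LApp (ess d1) (ess d2)"
| "ess (DPair d1 d2) = ess d1"
| "ess (DPr1 d) = ess d"
| "ess (DPr2 d) = ess d"
| "ess (DCoe d s) = ess d"

inductive dtyp :: "theory_name \<Rightarrow> rel_name \<Rightarrow> basis \<Rightarrow> dterm \<Rightarrow> ity \<Rightarrow> bool" for T R where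
  top: "has_omega T \<Longrightarrow> dtyp T R B (DU d) Om"
| ax: "B x = Some s \<Longrightarrow> dtyp T R B (DVar x) s"
| arrI: "ty_ok T s \<Longrightarrow> dtyp T R (ext_basis s B) d t \<Longrightarrow> dtyp T R B (DLam s d) (Arr s t)"
| arrE: "dtyp T R B d1 (Arr s t) \<Longrightarrow> dtyp T R B d2 s \<Longrightarrow> dtyp T R B (DApp d1 d2) t"
| interI: "dtyp T R B d1 s \<Longrightarrow> dtyp T R B d2 t \<Longrightarrow> releq R (ess d1) (ess d2) \<Longrightarrow>
      dtyp T R B (DPair d1 d2) (Inter s t)"
| interE1: "dtyp T R B d (Inter s t) \<Longrightarrow> dtyp T R B (DPr1 d) s"
| interE2: "dtyp T R B d (Inter s t) \<Longrightarrow> dtyp T R B (DPr2 d) t"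
| sub: "dtyp T R B d s \<Longrightarrow> leq T s t \<Longrightarrow> dtyp T R B (DCoe d t) t"

definition sound :: "theory_name \<Rightarrow> rel_name \<Rightarrow> bool" where
  "sound T R \<longleftrightarrow> (\<forall>B d s. basis_ok T B \<longrightarrow> ty_ok T s \<longrightarrow>
      dtyp T R B d s \<longrightarrow> ltyp T B (ess d) s)"

definition complete :: "theory_name \<Rightarrow> rel_name \<Rightarrow> bool" where
  "complete T R \<longleftrightarrow> (\<forall>B M s. basis_ok T B \<longrightarrow> ty_ok T s \<longrightarrow>
      ltyp T B M s \<longrightarrow> (\<exists>d. M = ess d \<and> dtyp T R B d s))"

definition isomorphic :: "theory_name \<Rightarrow> rel_name \<Rightarrow> bool" where
  "isomorphic T R \<longleftrightarrow> sound T R \<and> complete T R"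

end

theory Submission
  imports Defs
begin

text \<open>
  The only rule of \<open>\<Delta>\<^sup>T\<^sub>R\<close> that relates two different essences is (\<open>\<inter>\<close>I), so
  \<open>\<Delta>\<^sup>T\<^sub>R\<close> is sound as soon as typability in \<open>\<lambda>\<^sup>T\<^sub>\<inter>\<close> is invariant under \<open>R\<close>.
  This is trivial for syntactic identity; for \<open>=\<^sub>\<beta>\<close> it is subject reduction together with
  subject expansion, and the latter needs \<open>\<omega>\<close> to type the argument that a redex discards.
  Without \<open>\<omega>\<close> expansion fails: \<open>\<lambda>x.(\<lambda>y.z)(x x)\<close> reduces to \<open>\<lambda>x.z : a\<^sub>2 \<rightarrow> a\<^sub>0\<close>, but cannot
  have that type itself, because \<open>x x\<close> would force the atom \<open>a\<^sub>2\<close> below an arrow.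
  With \<open>\<eta>\<close> even \<open>\<omega>\<close> does not help: \<open>\<lambda>y.x y\<close> reduces to \<open>x : a\<^sub>0\<close>, while no abstraction has
  an atomic type. Completeness holds for every \<open>R\<close>, since \<open>R\<close> is reflexive and a
  pair of two derivations for the same term is always admitted.
\<close>

lemma leq_ty_ok: "leq T s t \<Longrightarrow> ty_ok T s \<and> ty_ok T t"
  by (induction rule: leq.induct) (auto simp: has_omega_def)

definition basis_types_ok :: "theory_name \<Rightarrow> basis \<Rightarrow> bool" where
  "basis_types_ok T B \<longleftrightarrow> (\<forall>x s. B x = Some s \<longrightarrow> ty_ok T s)"

lemma basis_types_ok_ext_basis:
  "basis_types_ok T B \<Longrightarrow> ty_ok T s \<Longrightarrow> basis_types_ok T (ext_basis s B)"
  unfolding basis_types_ok_def ext_basis_def by (auto split: nat.splits)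

lemma basis_ok_imp_basis_types_ok: "basis_ok T B \<Longrightarrow> basis_types_ok T B"
  by (simp add: basis_ok_def basis_types_ok_def)

lemma ltyp_ty_ok: "ltyp T B M t \<Longrightarrow> basis_types_ok T B \<Longrightarrow> ty_ok T t"
proof (induction rule: ltyp.induct)
  case (arrI s B M t) thus ?case using basis_types_ok_ext_basis by auto
next
  case (sub B M s t) thus ?case using leq_ty_ok by auto
qed (auto simp: basis_types_ok_def has_omega_def)

text \<open>The first disjunct is needed because \<open>leq\<close> is reflexive only on well-formed types.\<close>
definition basis_leq :: "theory_name \<Rightarrow> basis \<Rightarrow> basis \<Rightarrow> bool" where
  "basis_leq T B' B \<longleftrightarrow>
     (\<forall>x s. B x = Some s \<longrightarrow> B' x = Some s \<or> (\<exists>s'. B' x = Some s' \<and> leq T s' s))"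

lemma basis_leq_ext_basis: "basis_leq T B' B \<Longrightarrow> basis_leq T (ext_basis s B') (ext_basis s B)"
  unfolding basis_leq_def ext_basis_def by (auto split: nat.splits)

lemma ltyp_basis_leq: "ltyp T B M t \<Longrightarrow> basis_leq T B' B \<Longrightarrow> ltyp T B' M t"
proof (induction arbitrary: B' rule: ltyp.induct)
  case (ax B x s)
  then show ?case unfolding basis_leq_def by (meson ltyp.ax ltyp.sub)
next
  case (arrI s B M t)
  then show ?case using basis_leq_ext_basis ltyp.arrI by blast
qed (meson ltyp.intros)+

fun abs_types :: "theory_name \<Rightarrow> basis \<Rightarrow> lterm \<Rightarrow> ity \<Rightarrow> bool" where
  "abs_types T B M (Atom i) = False"
| "abs_types T B M Om = True"
| "abs_types T B M (Arr s t) = ltyp T (ext_basis s B) M t"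
| "abs_types T B M (Inter s t) = (abs_types T B M s \<and> abs_types T B M t)"

lemma abs_types_leq: "leq T u v \<Longrightarrow> abs_types T B M u \<Longrightarrow> abs_types T B M v"
proof (induction arbitrary: B M rule: leq.induct)
  case (omega_arr s) thus ?case by (auto intro: ltyp.top simp: has_omega_def)
next
  case (arr_inter s t r) thus ?case by (auto intro: ltyp.interI)
next
  case (arr s2 s1 t1 t2)
  have "basis_leq T (ext_basis s2 B) (ext_basis s1 B)"
    using arr(2) unfolding basis_leq_def ext_basis_def by (auto split: nat.splits)
  then show ?case using arr by (auto intro: ltyp_basis_leq ltyp.sub)
qed auto

lemma ltyp_LAbs_abs_types: "ltyp T B (LAbs M) u \<Longrightarrow> abs_types T B M u"
  by (induction "LAbs M" u rule: ltyp.induct) (auto intro: abs_types_leq)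

lemma ltyp_LAbs_Arr_inv: "ltyp T B (LAbs M) (Arr s t) \<Longrightarrow> ltyp T (ext_basis s B) M t"
  using ltyp_LAbs_abs_types by fastforce

definition insert_basis :: "nat \<Rightarrow> ity \<Rightarrow> basis \<Rightarrow> basis" where
  "insert_basis k u B = (\<lambda>n. if n < k then B n else if n = k then Some u else B (n - 1))"

lemma ext_basis_eq_insert_basis: "ext_basis s B = insert_basis 0 s B"
  unfolding ext_basis_def insert_basis_def by (rule ext) (auto split: nat.splits)

lemma ext_basis_insert_basis:
  "ext_basis u (insert_basis k s B) = insert_basis (Suc k) s (ext_basis u B)"
  unfolding ext_basis_def insert_basis_def by (rule ext) (auto split: nat.splits)

definition shift :: "nat \<Rightarrow> nat \<Rightarrow> nat" where
  "shift k n = (if n < k then n else Suc n)"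

lemma shift_ext_basis:
  "\<forall>n. B n = B' (shift k n) \<Longrightarrow> \<forall>n. ext_basis s B n = ext_basis s B' (shift (Suc k) n)"
  by (auto simp: ext_basis_def shift_def split: nat.splits)

lemma ltyp_llift:
  "ltyp T B N s \<Longrightarrow> \<forall>n. B n = B' (shift k n) \<Longrightarrow> ltyp T B' (llift N k) s"
proof (induction arbitrary: B' k rule: ltyp.induct)
  case (ax B x s)
  have "B' (shift k x) = Some s" using ax by metis
  then show ?case by (cases "x < k") (auto simp: shift_def intro: ltyp.ax)
next
  case (arrI s B M t)
  thus ?case using shift_ext_basis by (auto intro: ltyp.arrI)
next
  case (arrE B M s t N)
  have "ltyp T B' (llift M k) (Arr s t)" "ltyp T B' (llift N k) s"
    using arrE.IH arrE.prems by blast+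
  thus ?case by (auto intro: ltyp.arrE)
qed (auto intro: ltyp.intros)

lemma ltyp_llift_inv:
  "ltyp T B' L s \<Longrightarrow> L = llift N k \<Longrightarrow> \<forall>n. B n = B' (shift k n) \<Longrightarrow> ltyp T B N s"
proof (induction arbitrary: B N k rule: ltyp.induct)
  case (ax B' x s)
  then obtain i where "N = LVar i" "x = shift k i"
    by (cases N) (auto simp: shift_def split: if_splits)
  thus ?case using ax by (auto intro: ltyp.ax)
next
  case (arrI s B' M t)
  then obtain N0 where N0: "N = LAbs N0" "M = llift N0 (Suc k)"
    by (cases N) (auto split: if_splits)
  have "ltyp T (ext_basis s B) N0 t"
    using arrI.IH[OF N0(2)] shift_ext_basis[OF arrI.prems(2)] by blast
  thus ?case using N0(1) arrI.hyps(1) by (simp add: ltyp.arrI)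
next
  case (arrE B' M s t N')
  then obtain N1 N2 where N12: "N = LApp N1 N2" "M = llift N1 k" "N' = llift N2 k"
    by (cases N) (auto split: if_splits)
  have "ltyp T B N1 (Arr s t)" "ltyp T B N2 s"
    using arrE.IH(1)[OF N12(2)] arrE.IH(2)[OF N12(3)] arrE.prems(2) by blast+
  thus ?case using N12(1) by (simp add: ltyp.arrE)
qed (auto intro: ltyp.intros)

lemma ltyp_lsubst:
  "ltyp T B' M t \<Longrightarrow> B' = insert_basis k s B \<Longrightarrow> ltyp T B N s \<Longrightarrow> ltyp T B (lsubst M N k) t"
proof (induction arbitrary: B k N rule: ltyp.induct)
  case (ax B' x s')
  thus ?case by (auto simp: insert_basis_def intro: ltyp.ax split: if_splits)
next
  case (arrI u B' M t)
  have "ltyp T (ext_basis u B) (llift N 0) s"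
    using arrI(5) by (rule ltyp_llift) (auto simp: ext_basis_def shift_def)
  thus ?case using arrI ext_basis_insert_basis by (auto intro: ltyp.arrI)
next
  case (arrE B' M u t N')
  have "ltyp T B (lsubst M N k) (Arr u t)" "ltyp T B (lsubst N' N k) u"
    using arrE.IH arrE.prems by blast+
  thus ?case by (auto intro: ltyp.arrE)
qed (auto intro: ltyp.intros)

lemma ltyp_beta: "ltyp T B M t \<Longrightarrow> beta M M' \<Longrightarrow> ltyp T B M' t"
proof (induction arbitrary: M' rule: ltyp.induct)
  case (ax B x s) thus ?case by (auto elim: beta.cases)
next
  case (arrI s B M t)
  from arrI.prems obtain M1 where "M' = LAbs M1" "beta M M1" by (auto elim: beta.cases)
  thus ?case using arrI by (auto intro: ltyp.arrI)
next
  case (arrE B M s t N)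
  from arrE(5) show ?case
  proof (cases rule: beta.cases)
    case b
    then obtain P where P: "M = LAbs P" "M' = lsubst P N 0" by auto
    hence "ltyp T (insert_basis 0 s B) P t"
      using arrE(1) ltyp_LAbs_Arr_inv ext_basis_eq_insert_basis by metis
    thus ?thesis using P arrE(2) ltyp_lsubst by blast
  qed (use arrE in \<open>auto intro: ltyp.arrE\<close>)
qed (auto intro: ltyp.intros)

subsection \<open>Subject expansion in the presence of \<open>\<omega>\<close>\<close>

lemma ltyp_insert_basis_leq:
  "ltyp T (insert_basis k u B) M t \<Longrightarrow> leq T u' u \<Longrightarrow> ltyp T (insert_basis k u' B) M t"
  by (erule ltyp_basis_leq) (auto simp: basis_leq_def insert_basis_def)

lemma ltyp_insert_basis_common_type:
  assumes "basis_types_ok T B"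
    and "ltyp T (insert_basis k u1 B) M1 t1" "ltyp T B N u1"
    and "ltyp T (insert_basis k u2 B) M2 t2" "ltyp T B N u2"
  obtains u where "ltyp T (insert_basis k u B) M1 t1" "ltyp T (insert_basis k u B) M2 t2"
    and "ltyp T B N u"
proof
  have "ty_ok T u1" "ty_ok T u2" using assms ltyp_ty_ok by blast+
  thus "ltyp T (insert_basis k (Inter u1 u2) B) M1 t1" "ltyp T (insert_basis k (Inter u1 u2) B) M2 t2"
    using assms(2,4) by (blast intro: ltyp_insert_basis_leq leq.incl1 leq.incl2)+
  show "ltyp T B N (Inter u1 u2)" using assms(3,5) by (rule ltyp.interI)
qed

lemma ltyp_lsubst_LVar_self:
  "ltyp T B N t \<Longrightarrow> \<exists>u. ltyp T (insert_basis k u B) (LVar k) t \<and> ltyp T B N u"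
  by (auto simp: insert_basis_def intro!: ltyp.ax)

text \<open>
  Conversely to \<open>ltyp_lsubst\<close>, the argument gets the intersection of the types of its
  copies in a derivation for \<open>M[N/k]\<close>, and \<open>\<omega>\<close> if there is no copy.
\<close>
lemma ltyp_lsubst_inv:
  "ltyp T B L t \<Longrightarrow> L = lsubst M N k \<Longrightarrow> has_omega T \<Longrightarrow> basis_types_ok T B \<Longrightarrow>
   \<exists>u. ltyp T (insert_basis k u B) M t \<and> ltyp T B N u"
proof (induction arbitrary: M N k rule: ltyp.induct)
  case (ax B x s)
  then obtain i where M: "M = LVar i" by (cases M) auto
  show ?case
  proof (cases "i = k")
    case True
    thus ?thesis using ax M ltyp_lsubst_LVar_self[OF ltyp.ax[of B x s T, OF ax.hyps]] by simp
  next
    case False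
    hence "insert_basis k Om B i = Some s"
      using ax M by (auto simp: insert_basis_def split: if_splits)
    thus ?thesis using M ax by (auto intro!: ltyp.ax ltyp.top)
  qed
next
  case (arrI s B L0 t)
  show ?case
  proof (cases M)
    case (LVar i)
    with arrI.prems(1) have "i = k" "N = LAbs L0" by (auto split: if_splits)
    thus ?thesis using LVar ltyp_lsubst_LVar_self[OF ltyp.arrI[OF arrI.hyps]] by simp
  next
    case (LAbs M0)
    hence "L0 = lsubst M0 (llift N 0) (Suc k)" using arrI.prems(1) by simp
    then obtain u where u: "ltyp T (insert_basis (Suc k) u (ext_basis s B)) M0 t"
      "ltyp T (ext_basis s B) (llift N 0) u"
      using arrI.IH arrI.prems(2) basis_types_ok_ext_basis[OF arrI.prems(3) arrI.hyps(1)] by blast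
    have "ltyp T B N u"
      using ltyp_llift_inv[OF u(2) HOL.refl] by (auto simp: ext_basis_def shift_def)
    moreover have "ltyp T (insert_basis k u B) (LAbs M0) (Arr s t)"
      using u(1) ext_basis_insert_basis[of s k u B] arrI.hyps(1) by (auto intro: ltyp.arrI)
    ultimately show ?thesis using LAbs by blast
  qed (use arrI.prems in auto)
next
  case (arrE B L1 s t L2)
  show ?case
  proof (cases M)
    case (LVar i)
    with arrE.prems(1) have "i = k" "N = LApp L1 L2" by (auto split: if_splits)
    thus ?thesis using LVar ltyp_lsubst_LVar_self[OF ltyp.arrE[OF arrE.hyps]] by simp
  next
    case (LApp M1 M2)
    hence "L1 = lsubst M1 N k" "L2 = lsubst M2 N k" using arrE.prems(1) by simp_all
    then obtain u1 u2 where u1: "ltyp T (insert_basis k u1 B) M1 (Arr s t)" "ltyp T B N u1"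
      and u2: "ltyp T (insert_basis k u2 B) M2 s" "ltyp T B N u2"
      using arrE.IH(1)[OF _ arrE.prems(2,3)] arrE.IH(2)[OF _ arrE.prems(2,3)] by blast
    obtain u where "ltyp T (insert_basis k u B) M1 (Arr s t)" "ltyp T (insert_basis k u B) M2 s"
      and "ltyp T B N u"
      using ltyp_insert_basis_common_type[OF arrE.prems(3) u1 u2] .
    thus ?thesis using LApp ltyp.arrE by blast
  qed (use arrE.prems in auto)
next
  case (interI B L s t)
  obtain u1 u2 where u1: "ltyp T (insert_basis k u1 B) M s" "ltyp T B N u1"
    and u2: "ltyp T (insert_basis k u2 B) M t" "ltyp T B N u2"
    using interI.IH[OF interI.prems] by blast
  obtain u where "ltyp T (insert_basis k u B) M s" "ltyp T (insert_basis k u B) M t"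
    and "ltyp T B N u"
    using ltyp_insert_basis_common_type[OF interI.prems(3) u1 u2] .
  thus ?case using ltyp.interI by blast
next
  case (interE1 B L s t)
  then obtain u where "ltyp T (insert_basis k u B) M (Inter s t)" "ltyp T B N u"
    using interE1.IH[OF interE1.prems] by blast
  thus ?case by (blast dest: ltyp.interE1)
next
  case (interE2 B L s t)
  then obtain u where "ltyp T (insert_basis k u B) M (Inter s t)" "ltyp T B N u"
    using interE2.IH[OF interE2.prems] by blast
  thus ?case by (blast dest: ltyp.interE2)
next
  case (top B L)
  thus ?case by (blast intro: ltyp.top)
next
  case (sub B L s t)
  then obtain u where "ltyp T (insert_basis k u B) M s" "ltyp T B N u"
    using sub.IH[OF sub.prems] by blast
  thus ?case using sub.hyps(2) by (blast intro: ltyp.sub)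
qed

lemma ltyp_beta_redex_expand:
  assumes "ltyp T B (lsubst P N 0) t" "has_omega T" "basis_types_ok T B"
  shows "ltyp T B (LApp (LAbs P) N) t"
proof -
  obtain u where u: "ltyp T (insert_basis 0 u B) P t" "ltyp T B N u"
    using ltyp_lsubst_inv[OF assms(1) HOL.refl assms(2,3)] by blast
  have "ty_ok T u" using ltyp_ty_ok u(2) assms(3) by blast
  hence "ltyp T B (LAbs P) (Arr u t)" using u(1) ext_basis_eq_insert_basis by (metis ltyp.arrI)
  thus ?thesis using u(2) by (rule ltyp.arrE)
qed

lemma ltyp_beta_expand:
  "ltyp T B L t \<Longrightarrow> beta M L \<Longrightarrow> has_omega T \<Longrightarrow> basis_types_ok T B \<Longrightarrow> ltyp T B M t"
proof (induction arbitrary: M rule: ltyp.induct)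
  case (ax B x s)
  from ax.prems(1) show ?case
    by (cases rule: beta.cases) (metis ax ltyp.ax ltyp_beta_redex_expand)
next
  case (arrI s B L0 t)
  from arrI.prems(1) show ?case
  proof (cases rule: beta.cases)
    case b thus ?thesis by (metis arrI ltyp.arrI ltyp_beta_redex_expand)
  next
    case (abs M0)
    thus ?thesis using arrI basis_types_ok_ext_basis by (auto intro: ltyp.arrI)
  qed
next
  case (arrE B L1 s t L2)
  from arrE.prems(1) show ?case
  proof (cases rule: beta.cases)
    case b thus ?thesis by (metis arrE ltyp.arrE ltyp_beta_redex_expand)
  qed (use arrE in \<open>auto intro: ltyp.arrE\<close>)
qed (meson ltyp.intros)+

lemma ltyp_beta_conv:
  assumes "(sup beta beta\<inverse>\<inverse>)\<^sup>*\<^sup>* M L" "has_omega T" "basis_types_ok T B"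
  shows "ltyp T B L t \<Longrightarrow> ltyp T B M t"
  using assms(1)
proof (induction rule: rtranclp_induct)
  case (step y z)
  hence "beta y z \<or> beta z y" by simp
  thus ?case using step ltyp_beta ltyp_beta_expand assms(2,3) by blast
qed

lemma sound_if_ltyp_closed_under_releq:
  assumes closed: "\<And>B M L t. basis_types_ok T B \<Longrightarrow> releq R M L \<Longrightarrow> ltyp T B L t \<Longrightarrow> ltyp T B M t"
  shows "sound T R"
proof -
  have "ltyp T B (ess d) s" if "dtyp T R B d s" "basis_types_ok T B" for B d s
    using that
  proof (induction rule: dtyp.induct)
    case (arrI s B d t) thus ?case using basis_types_ok_ext_basis by (simp add: ltyp.arrI)
  next
    case (interI B d1 s d2 t)
    thus ?case using closed by (auto intro: ltyp.interI)
  qed (auto intro: ltyp.intros)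
  thus ?thesis unfolding sound_def using basis_ok_imp_basis_types_ok by blast
qed

lemma sound_Syn: "sound T Syn"
  by (rule sound_if_ltyp_closed_under_releq) simp

lemma sound_Beta: "has_omega T \<Longrightarrow> sound T Beta"
  by (rule sound_if_ltyp_closed_under_releq) (auto intro: ltyp_beta_conv)

lemma releq_refl: "releq R M M"
  by (cases R) auto

lemma ess_surj: "\<exists>d. ess d = M"
  by (induction M) (metis ess.simps(2-4))+

lemma dtyp_if_ltyp: "ltyp T B M s \<Longrightarrow> \<exists>d. M = ess d \<and> dtyp T R B d s"
proof (induction rule: ltyp.induct)
  case (ax B x s) thus ?case by (metis ess.simps(2) dtyp.ax)
next
  case (arrI s B M t) thus ?case by (metis ess.simps(3) dtyp.arrI)
next
  case (arrE B M s t N) thus ?case by (metis ess.simps(4) dtyp.arrE)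
next
  case (interI B M s t) thus ?case by (metis ess.simps(5) dtyp.interI releq_refl)
next
  case (interE1 B M s t) thus ?case by (metis ess.simps(6) dtyp.interE1)
next
  case (interE2 B M s t) thus ?case by (metis ess.simps(7) dtyp.interE2)
next
  case (top B M) thus ?case by (metis ess.simps(1) ess_surj dtyp.top)
next
  case (sub B M s t) thus ?case by (metis ess.simps(8) dtyp.sub)
qed

lemma complete: "complete T R"
  unfolding complete_def using dtyp_if_ltyp by blast

subsection \<open>Counterexamples to soundness\<close>

lemma ltyp_LVar_leq:
  "ltyp T B (LVar x) t \<Longrightarrow> B x = Some s \<Longrightarrow> ty_ok T s \<Longrightarrow> \<not> has_omega T \<Longrightarrow> leq T s t"
proof (induction "LVar x" t rule: ltyp.induct)
  case (ax B s) thus ?case by (auto intro: leq.refl)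
next
  case (interI B t1 t2) thus ?case by (auto intro: leq.glb)
next
  case (interE1 B t1 t2)
  hence le: "leq T s (Inter t1 t2)" by auto
  hence "ty_ok T t1" "ty_ok T t2" using leq_ty_ok[OF le] by auto
  thus ?case using le by (blast intro: leq.trans leq.incl1)
next
  case (interE2 B t1 t2)
  hence le: "leq T s (Inter t1 t2)" by auto
  hence "ty_ok T t1" "ty_ok T t2" using leq_ty_ok[OF le] by auto
  thus ?case using le by (blast intro: leq.trans leq.incl2)
next
  case (sub B t1 t2) thus ?case by (auto intro: leq.trans)
qed auto

lemma ltyp_LApp_inv:
  "ltyp T B (LApp P Q) t \<Longrightarrow> \<not> has_omega T \<Longrightarrow>
   (\<exists>s. ltyp T B Q s) \<and> (\<exists>s t'. ltyp T B P (Arr s t'))"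
  by (induction "LApp P Q" t rule: ltyp.induct) auto

fun arrow_free :: "ity \<Rightarrow> bool" where
  "arrow_free (Atom _) = True"
| "arrow_free Om = True"
| "arrow_free (Arr _ _) = False"
| "arrow_free (Inter s t) = (arrow_free s \<and> arrow_free t)"

lemma leq_arrow_free: "leq T s t \<Longrightarrow> T \<noteq> BCD \<Longrightarrow> arrow_free s \<Longrightarrow> arrow_free t"
  by (induction rule: leq.induct) auto

lemma beta_imp_beta_eta: "beta M N \<Longrightarrow> beta_eta M N"
  by (induction rule: beta.induct) (auto intro: beta_eta.intros)

lemma releq_if_beta: "beta M N \<Longrightarrow> R \<noteq> Syn \<Longrightarrow> releq R M N"
  by (cases R) (auto intro: beta_imp_beta_eta)

text \<open>
  The pair of \<open>\<lambda>x:a\<^sub>1\<inter>(a\<^sub>1\<rightarrow>a\<^sub>1). (\<lambda>y:a\<^sub>1. z) ((pr\<^sub>2 x) (pr\<^sub>1 x))\<close> and \<open>\<lambda>x:a\<^sub>2. z\<close>, for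
  \<open>z : a\<^sub>0\<close> (de Bruijn index 0 outside the binders).
\<close>
definition z_basis :: basis where
  "z_basis = Map.empty(0 := Some (Atom 0))"

definition erasing_dterm :: dterm where
  "erasing_dterm = DLam (Inter (Atom 1) (Arr (Atom 1) (Atom 1)))
     (DApp (DLam (Atom 1) (DVar 2)) (DApp (DPr2 (DVar 0)) (DPr1 (DVar 0))))"

definition const_dterm :: dterm where
  "const_dterm = DLam (Atom 2) (DVar 1)"

lemma dtyp_erasing_dterm:
  "dtyp T R z_basis erasing_dterm (Arr (Inter (Atom 1) (Arr (Atom 1) (Atom 1))) (Atom 0))"
proof -
  let ?B = "ext_basis (Inter (Atom 1) (Arr (Atom 1) (Atom 1))) z_basis"
  have "dtyp T R ?B (DVar 0) (Inter (Atom 1) (Arr (Atom 1) (Atom 1)))"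
    by (rule dtyp.ax) (simp add: ext_basis_def)
  hence "dtyp T R ?B (DApp (DPr2 (DVar 0)) (DPr1 (DVar 0))) (Atom 1)"
    by (meson dtyp.interE1 dtyp.interE2 dtyp.arrE)
  moreover have "dtyp T R ?B (DLam (Atom 1) (DVar 2)) (Arr (Atom 1) (Atom 0))"
    by (rule dtyp.arrI) (auto intro!: dtyp.ax simp: ext_basis_def z_basis_def)
  ultimately show ?thesis
    unfolding erasing_dterm_def by (auto intro: dtyp.arrI dtyp.arrE)
qed

lemma dtyp_const_dterm: "dtyp T R z_basis const_dterm (Arr (Atom 2) (Atom 0))"
  unfolding const_dterm_def
  by (rule dtyp.arrI) (auto intro!: dtyp.ax simp: ext_basis_def z_basis_def)

lemma beta_erasing_const: "beta (ess erasing_dterm) (ess const_dterm)"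
  using beta.abs[OF beta.b[of "LVar 2" "LApp (LVar 0) (LVar 0)"]]
  by (simp add: erasing_dterm_def const_dterm_def)

lemma not_ltyp_erasing_dterm:
  assumes "\<not> has_omega T"
  shows "\<not> ltyp T z_basis (ess erasing_dterm) (Arr (Atom 2) (Atom 0))"
proof
  let ?B = "ext_basis (Atom 2) z_basis"
  assume "ltyp T z_basis (ess erasing_dterm) (Arr (Atom 2) (Atom 0))"
  hence "ltyp T ?B (LApp (LAbs (LVar 2)) (LApp (LVar 0) (LVar 0))) (Atom 0)"
    unfolding erasing_dterm_def by (auto dest: ltyp_LAbs_Arr_inv)
  then obtain s where "ltyp T ?B (LApp (LVar 0) (LVar 0)) s"
    using ltyp_LApp_inv assms by blast
  then obtain s' t' where "ltyp T ?B (LVar 0) (Arr s' t')"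
    using ltyp_LApp_inv assms by blast
  hence "leq T (Atom 2) (Arr s' t')"
    using ltyp_LVar_leq assms by (fastforce simp: ext_basis_def)
  moreover have "T \<noteq> BCD" using assms by (auto simp: has_omega_def)
  ultimately show False using leq_arrow_free by fastforce
qed

lemma sound_ltyp:
  "sound T R \<Longrightarrow> basis_ok T B \<Longrightarrow> ty_ok T s \<Longrightarrow> dtyp T R B d s \<Longrightarrow> ltyp T B (ess d) s"
  by (simp add: sound_def)

lemma not_sound_without_omega:
  assumes "\<not> has_omega T" "R \<noteq> Syn"
  shows "\<not> sound T R"
proof
  assume "sound T R"
  have "dtyp T R z_basis (DPair erasing_dterm const_dterm)
          (Inter (Arr (Inter (Atom 1) (Arr (Atom 1) (Atom 1))) (Atom 0)) (Arr (Atom 2) (Atom 0)))"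
    using dtyp_erasing_dterm dtyp_const_dterm releq_if_beta[OF beta_erasing_const assms(2)]
    by (rule dtyp.interI)
  hence "ltyp T z_basis (ess (DPair erasing_dterm const_dterm))
          (Inter (Arr (Inter (Atom 1) (Arr (Atom 1) (Atom 1))) (Atom 0)) (Arr (Atom 2) (Atom 0)))"
    by (rule sound_ltyp[OF \<open>sound T R\<close>, rotated 2]) (simp_all add: basis_ok_def z_basis_def)
  hence "ltyp T z_basis (ess erasing_dterm) (Arr (Atom 2) (Atom 0))"
    by (auto dest: ltyp.interE2)
  thus False using not_ltyp_erasing_dterm[OF assms(1)] by blast
qed

text \<open>
  The pair of \<open>\<lambda>y:a\<^sub>1. (pr\<^sub>2 x) y\<close> and \<open>pr\<^sub>1 x\<close> for \<open>x : a\<^sub>0 \<inter> (a\<^sub>1\<rightarrow>a\<^sub>2)\<close>: its essence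
  \<open>\<lambda>y. x y\<close> would need the atomic type \<open>a\<^sub>0\<close>.
\<close>
lemma not_sound_BetaEta: "\<not> sound T BetaEta"
proof
  assume sound: "sound T BetaEta"
  define B where "B = (Map.empty(0 := Some (Inter (Atom 0) (Arr (Atom 1) (Atom 2)))) :: basis)"
  define eta_dterm where "eta_dterm = DLam (Atom 1) (DApp (DPr2 (DVar 1)) (DVar 0))"
  have x: "dtyp T BetaEta (ext_basis (Atom 1) B) (DVar 1) (Inter (Atom 0) (Arr (Atom 1) (Atom 2)))"
    by (rule dtyp.ax) (simp add: ext_basis_def B_def)
  have y: "dtyp T BetaEta (ext_basis (Atom 1) B) (DVar 0) (Atom 1)"
    by (rule dtyp.ax) (simp add: ext_basis_def)
  have "dtyp T BetaEta B eta_dterm (Arr (Atom 1) (Atom 2))"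
    unfolding eta_dterm_def by (rule dtyp.arrI[OF _ dtyp.arrE[OF dtyp.interE2[OF x] y]]) simp
  moreover have "dtyp T BetaEta B (DPr1 (DVar 0)) (Atom 0)"
    by (rule dtyp.interE1, rule dtyp.ax) (simp add: B_def)
  moreover have "releq BetaEta (ess eta_dterm) (ess (DPr1 (DVar 0)))"
    using beta_eta.e[of "LVar 0"] by (auto simp: eta_dterm_def)
  ultimately have "dtyp T BetaEta B (DPair eta_dterm (DPr1 (DVar 0)))
                     (Inter (Arr (Atom 1) (Atom 2)) (Atom 0))"
    by (rule dtyp.interI)
  hence "ltyp T B (ess (DPair eta_dterm (DPr1 (DVar 0)))) (Inter (Arr (Atom 1) (Atom 2)) (Atom 0))"
    by (rule sound_ltyp[OF sound, rotated 2]) (simp_all add: basis_ok_def B_def)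
  hence "ltyp T B (ess eta_dterm) (Atom 0)" by (auto dest: ltyp.interE2)
  thus False unfolding eta_dterm_def using ltyp_LAbs_abs_types by fastforce
qed

lemma sound_iff: "sound T R \<longleftrightarrow> R = Syn \<or> (R = Beta \<and> has_omega T)"
  using sound_Syn sound_Beta not_sound_without_omega not_sound_BetaEta
  by (cases R) auto

theorem mainTheorem14:
  shows "(sound CD Syn \<and> sound CDV Syn \<and> sound CDS Syn \<and> sound BCD Syn
          \<and> sound CDS Beta \<and> sound BCD Beta
          \<and> \<not> sound CD Beta \<and> \<not> sound CDV Beta
          \<and> \<not> sound CDV BetaEta \<and> \<not> sound BCD BetaEta)
     \<and> (\<forall>T. complete T Syn \<and> complete T Beta)
     \<and> complete CDV BetaEta \<and> complete BCD BetaEta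
     \<and> (\<forall>T R. (R = Syn \<or> R = Beta \<or> (R = BetaEta \<and> (T = CDV \<or> T = BCD))) \<longrightarrow>
           (isomorphic T R \<longleftrightarrow>
              (R = Syn \<or> (R = Beta \<and> (T = CDS \<or> T = BCD)))))"
  by (auto simp: isomorphic_def sound_iff complete has_omega_def)

end
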